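(* Let $A$ and $G$ be $3$-connected cubic graphs. Then every graph $G\circ A^-$ is $3$-connected.
   Context: Let $G$ and $A$ be $3$-regular graphs, let $a$ be a vertex of $A$ and $A^-=A-a$. A graph $G\circ A^-$ is any graph obtained by replacing each vertex $v$ of $G$ by a copy $A^-_v$ of $A^-$ and, for each edge $uv$ of $G$, adding an edge joining a vertex of degree $2$ of $A^-_u$ to a vertex of degree $2$ of $A^-_v$, so that each degree-$2$ vertex of each copy is incident with exactly one added edge (the choices of $a$ and of these edges are arbitrary). *)

theory Defs
  imports Main
begin

definition sgraph :: "'v set \<Rightarrow> ('v \<Rightarrow> 'v \<Rightarrow> bool) \<Rightarrow> bool" where
  "sgraph V E \<longleftrightarrow> finite V \<and> (\<forall>x y. E x y \<longrightarrow> x \<in> V \<and> y \<in> V \<and> x \<noteq> y \<and> E y x)"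

definition nbrs :: "'v set \<Rightarrow> ('v \<Rightarrow> 'v \<Rightarrow> bool) \<Rightarrow> 'v \<Rightarrow> 'v set" where
  "nbrs V E v = {u \<in> V. E v u}"

definition cubic :: "'v set \<Rightarrow> ('v \<Rightarrow> 'v \<Rightarrow> bool) \<Rightarrow> bool" where
  "cubic V E \<longleftrightarrow> sgraph V E \<and> (\<forall>v \<in> V. card (nbrs V E v) = 3)"

definition gconnected :: "'v set \<Rightarrow> ('v \<Rightarrow> 'v \<Rightarrow> bool) \<Rightarrow> bool" where
  "gconnected V E \<longleftrightarrow> V \<noteq> {} \<and>
     (\<forall>x \<in> V. \<forall>y \<in> V. (x, y) \<in> {(u, w). u \<in> V \<and> w \<in> V \<and> E u w}\<^sup>*)"

definition k_connected :: "nat \<Rightarrow> 'v set \<Rightarrow> ('v \<Rightarrow> 'v \<Rightarrow> bool) \<Rightarrow> bool" where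
  "k_connected k V E \<longleftrightarrow> sgraph V E \<and> k < card V \<and>
     (\<forall>S \<subseteq> V. card S < k \<longrightarrow> gconnected (V - S) E)"

text \<open>The graph G \<circ> A^-: vertex (u,x) is vertex x of the copy A^-_u.
  p u v is the degree-2 vertex (a neighbour of a in A) of the copy A^-_u
  that is joined to the copy A^-_v for the edge uv of G.\<close>
definition comp_vertices :: "'g set \<Rightarrow> 'a set \<Rightarrow> 'a \<Rightarrow> ('g \<times> 'a) set" where
  "comp_vertices VG VA a = VG \<times> (VA - {a})"

definition comp_edges ::
  "'g set \<Rightarrow> ('g \<Rightarrow> 'g \<Rightarrow> bool) \<Rightarrow> ('a \<Rightarrow> 'a \<Rightarrow> bool) \<Rightarrow> 'a \<Rightarrow> ('g \<Rightarrow> 'g \<Rightarrow> 'a)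
     \<Rightarrow> ('g \<times> 'a) \<Rightarrow> ('g \<times> 'a) \<Rightarrow> bool" where
  "comp_edges VG EG EA a p = (\<lambda>(u, x) (v, y).
      (u = v \<and> u \<in> VG \<and> x \<noteq> a \<and> y \<noteq> a \<and> EA x y) \<or>
      (EG u v \<and> x = p u v \<and> y = p v u))"

text \<open>Admissible choice of the added edges: at every copy, the edges of G at u
  are matched bijectively with the degree-2 vertices of A^-_u (the neighbours of a),
  so each such vertex lies on exactly one added edge.\<close>
definition valid_ports ::
  "'g set \<Rightarrow> ('g \<Rightarrow> 'g \<Rightarrow> bool) \<Rightarrow> 'a set \<Rightarrow> ('a \<Rightarrow> 'a \<Rightarrow> bool) \<Rightarrow> 'a \<Rightarrow> ('g \<Rightarrow> 'g \<Rightarrow> 'a) \<Rightarrow> bool" where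
  "valid_ports VG EG VA EA a p \<longleftrightarrow>
     (\<forall>u \<in> VG. bij_betw (p u) (nbrs VG EG u) (nbrs VA EA a))"

end

theory Submission
  imports Defs
begin

text \<open>Let S be a set of at most two vertices of G \<circ> A^-, and call a copy A^-_u intact if it
  misses S. Intact copies are connected (A - a is connected), and G minus the at most two
  damaged indices is connected, so all intact copies lie in one component, linked by the
  added edges. A surviving vertex (u, x) of a damaged copy escapes through a port p u w with
  w intact: if S has two vertices in A^-_u then S lies inside this copy, and a path from x to
  a in A - S_u reaches a through a neighbour of a, i.e. a port; otherwise at most one other
  copy and at most one port of A^-_u are damaged, so one of the (at least) three edges of G
  at u is usable, and its port is reachable from x in A - a - S_u.\<close>

definition induced_rel :: "'v set \<Rightarrow> ('v \<Rightarrow> 'v \<Rightarrow> bool) \<Rightarrow> ('v \<times> 'v) set" where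
  "induced_rel V E = {(x, y). x \<in> V \<and> y \<in> V \<and> E x y}"

lemma gconnected_iff_induced_rel:
  "gconnected V E \<longleftrightarrow> V \<noteq> {} \<and> (\<forall>x\<in>V. \<forall>y\<in>V. (x, y) \<in> (induced_rel V E)\<^sup>*)"
  by (simp add: gconnected_def induced_rel_def)

lemma rtrancl_map:
  assumes "(x, y) \<in> r\<^sup>*" and "\<And>x y. (x, y) \<in> r \<Longrightarrow> (f x, f y) \<in> s"
  shows "(f x, f y) \<in> s\<^sup>*"
  using assms(1) by induction (auto intro: rtrancl_into_rtrancl assms(2))

lemma induced_rel_rtrancl_closed:
  "(x, y) \<in> (induced_rel V E)\<^sup>* \<Longrightarrow> x \<in> V \<Longrightarrow> y \<in> V"
  by (induction rule: rtrancl_induct) (auto simp: induced_rel_def)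

lemma induced_rel_rtrancl_first_step:
  assumes "(x, y) \<in> (induced_rel V E)\<^sup>*" and "x \<noteq> y"
  obtains z where "z \<in> V" and "E x z"
  using assms by (auto simp: induced_rel_def elim: converse_rtranclE)

lemma induced_rel_rtrancl_last_step:
  assumes "(x, a) \<in> (induced_rel V E)\<^sup>*" and "x \<noteq> a"
  obtains y where "y \<in> V" and "E y a" and "(x, y) \<in> (induced_rel (V - {a}) E)\<^sup>*"
proof -
  have "\<exists>y. y \<in> V \<and> E y a \<and> (x, y) \<in> (induced_rel (V - {a}) E)\<^sup>*"
    using assms
  proof (induction rule: converse_rtrancl_induct)
    case (step x z)
    show ?case
    proof (cases "z = a")
      case True
      with step.hyps(1) show ?thesis by (auto simp: induced_rel_def)
    next
      case False
      with step.IH obtain y where y: "y \<in> V" "E y a" "(z, y) \<in> (induced_rel (V - {a}) E)\<^sup>*"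
        by blast
      have "(x, z) \<in> induced_rel (V - {a}) E"
        using step.hyps(1) step.prems False by (auto simp: induced_rel_def)
      with y show ?thesis by (blast intro: converse_rtrancl_into_rtrancl)
    qed
  qed simp
  with that show ?thesis by blast
qed

lemma gconnected_if_reaches_root:
  assumes "\<And>x y. E x y \<Longrightarrow> E y x" and "r \<in> V"
    and "\<And>x. x \<in> V \<Longrightarrow> (x, r) \<in> (induced_rel V E)\<^sup>*"
  shows "gconnected V E"
proof -
  have "sym ((induced_rel V E)\<^sup>*)"
    by (rule sym_rtrancl) (auto simp: sym_def induced_rel_def intro: assms(1))
  then show ?thesis
    unfolding gconnected_iff_induced_rel
    using assms(2,3) by (blast dest: symD intro: rtrancl_trans)
qed

lemma sgraph_edgeD: "sgraph V E \<Longrightarrow> E x y \<Longrightarrow> x \<in> V \<and> y \<in> V \<and> x \<noteq> y \<and> E y x"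
  by (simp add: sgraph_def)

lemma k_connected_gconnected_Diff:
  "k_connected k V E \<Longrightarrow> S \<subseteq> V \<Longrightarrow> card S < k \<Longrightarrow> gconnected (V - S) E"
  by (simp add: k_connected_def)

lemma k_connected_card_nbrs_ge:
  assumes conn: "k_connected k V E" and v: "v \<in> V"
  shows "k \<le> card (nbrs V E v)"
proof (rule ccontr)
  let ?N = "nbrs V E v"
  assume "\<not> k \<le> card ?N"
  then have small: "card ?N < k" by simp
  have sg: "sgraph V E" and big: "k < card V"
    using conn by (auto simp: k_connected_def)
  have "finite V" using sg by (simp add: sgraph_def)
  then have "card (insert v ?N) < card V"
    using small big card_insert_le_m1[of k ?N v] by (simp add: card_insert_if nbrs_def)
  then have "\<not> V \<subseteq> insert v ?N"
    using card_mono[of "insert v ?N" V] \<open>finite V\<close> v by (auto simp: nbrs_def)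
  then obtain y where y: "y \<in> V" "y \<notin> insert v ?N" by blast
  have "v \<notin> ?N" using sg by (auto simp: nbrs_def sgraph_def)
  then have "(v, y) \<in> (induced_rel (V - ?N) E)\<^sup>*"
    using k_connected_gconnected_Diff[OF conn _ small] v y
    by (auto simp: gconnected_iff_induced_rel nbrs_def)
  then obtain z where "z \<in> V - ?N" "E v z"
    using y by (auto elim: induced_rel_rtrancl_first_step)
  then show False by (simp add: nbrs_def)
qed

lemma card_vimage_Pair_add_card_fst_image_le:
  assumes "finite S"
  shows "card (Pair u -` S) + card (fst ` S - {u}) \<le> card S"
proof -
  have "Pair u ` (Pair u -` S) = S \<inter> {u} \<times> UNIV" by auto
  then have "card (Pair u -` S) = card (S \<inter> {u} \<times> UNIV)"
    by (metis card_image inj_on_def prod.inject)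
  moreover have "fst ` S - {u} = fst ` (S - {u} \<times> UNIV)" by auto
  then have "card (fst ` S - {u}) \<le> card (S - {u} \<times> UNIV)"
    by (simp add: card_image_le assms)
  ultimately show ?thesis using card_Int_Diff[OF assms, of "{u} \<times> UNIV"] by linarith
qed

locale port_replacement =
  fixes VG :: "'g set" and EG :: "'g \<Rightarrow> 'g \<Rightarrow> bool"
    and VA :: "'a set" and EA :: "'a \<Rightarrow> 'a \<Rightarrow> bool"
    and a :: 'a and p :: "'g \<Rightarrow> 'g \<Rightarrow> 'a"
  assumes sgraph_G: "sgraph VG EG" and sgraph_A: "sgraph VA EA" and a_in_VA: "a \<in> VA"
    and valid_ports: "valid_ports VG EG VA EA a p"
begin

abbreviation "VH \<equiv> comp_vertices VG VA a"
abbreviation "EH \<equiv> comp_edges VG EG EA a p"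

lemmas edge_G = sgraph_edgeD[OF sgraph_G]
lemmas edge_A = sgraph_edgeD[OF sgraph_A]

lemma port_bij: "u \<in> VG \<Longrightarrow> bij_betw (p u) (nbrs VG EG u) (nbrs VA EA a)"
  using valid_ports by (simp add: valid_ports_def)

lemma port_nbr: "EG u w \<Longrightarrow> p u w \<in> VA - {a} \<and> EA a (p u w)"
  using bij_betw_apply[OF port_bij] edge_G edge_A by (fastforce simp: nbrs_def)

lemma sgraph_comp: "sgraph VH EH"
proof -
  have "x \<in> VH \<and> y \<in> VH \<and> x \<noteq> y \<and> EH y x" if e: "EH x y" for x y
  proof (cases x, cases y)
    fix u x' v y' assume xy: "x = (u, x')" "y = (v, y')"
    from e xy consider "u = v" "u \<in> VG" "x' \<noteq> a" "y' \<noteq> a" "EA x' y'"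
      | "EG u v" "x' = p u v" "y' = p v u"
      by (auto simp: comp_edges_def)
    then show ?thesis
    proof cases
      case 1
      then show ?thesis using edge_A[OF 1(5)] xy by (auto simp: comp_vertices_def comp_edges_def)
    next
      case 2
      then show ?thesis using edge_G[OF 2(1)] port_nbr[OF 2(1)] port_nbr[of v u] xy
        by (auto simp: comp_vertices_def comp_edges_def)
    qed
  qed
  moreover have "finite VH"
    using sgraph_G sgraph_A by (simp add: comp_vertices_def sgraph_def)
  ultimately show ?thesis by (simp add: sgraph_def)
qed

lemma card_comp_vertices: "card VH = card VG * (card VA - 1)"
  using sgraph_A a_in_VA by (simp add: comp_vertices_def card_cartesian_product sgraph_def)

lemma copy_path:
  assumes "(x, y) \<in> (induced_rel W EA)\<^sup>*" and "u \<in> VG" and "{u} \<times> W \<subseteq> VH - S"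
  shows "((u, x), (u, y)) \<in> (induced_rel (VH - S) EH)\<^sup>*"
  using assms(1)
proof (rule rtrancl_map[where f = "Pair u"])
  show "((u, x'), (u, y')) \<in> induced_rel (VH - S) EH" if "(x', y') \<in> induced_rel W EA" for x' y'
    using that assms(2,3) by (auto simp: induced_rel_def comp_vertices_def comp_edges_def)
qed

lemma port_edge:
  assumes "EG u w" and "(u, p u w) \<notin> S" and "(w, p w u) \<notin> S"
  shows "((u, p u w), (w, p w u)) \<in> induced_rel (VH - S) EH"
  using assms edge_G port_nbr by (auto simp: induced_rel_def comp_vertices_def comp_edges_def)

end

locale three_connected_replacement = port_replacement +
  assumes three_connected_G: "k_connected 3 VG EG"
    and three_connected_A: "k_connected 3 VA EA"
begin

lemma gconnected_A_Diff: "S \<subseteq> VA \<Longrightarrow> card S < 3 \<Longrightarrow> gconnected (VA - S) EA"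
  by (rule k_connected_gconnected_Diff[OF three_connected_A])

lemma card_VA_minus_a: "3 \<le> card (VA - {a})"
proof -
  have "3 < card VA" and "finite VA"
    using three_connected_A sgraph_A by (simp_all add: k_connected_def sgraph_def)
  then show ?thesis using a_in_VA by simp
qed

context
  fixes S
  assumes S_subset: "S \<subseteq> VH" and card_S: "card S < 3"
begin

lemma finite_S: "finite S"
  using S_subset sgraph_comp finite_subset by (auto simp: sgraph_def)

lemma card_fst_S: "card (fst ` S) < 3"
  using card_image_le[OF finite_S, of fst] card_S by linarith

lemma intact_copy_connected:
  assumes w: "w \<in> VG - fst ` S" and "x \<in> VA - {a}" and "y \<in> VA - {a}"
  shows "((w, x), (w, y)) \<in> (induced_rel (VH - S) EH)\<^sup>*"
proof -
  have "(x, y) \<in> (induced_rel (VA - {a}) EA)\<^sup>*"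
    using gconnected_A_Diff[of "{a}"] a_in_VA assms(2,3)
    by (simp add: gconnected_iff_induced_rel)
  moreover have "{w} \<times> (VA - {a}) \<subseteq> VH - S"
    using w by (auto simp: comp_vertices_def intro: rev_image_eqI)
  ultimately show ?thesis
    using w by (simp add: copy_path)
qed

lemma intact_copies_connected:
  assumes u: "u \<in> VG - fst ` S" and v: "v \<in> VG - fst ` S"
    and x: "x \<in> VA - {a}" and y: "y \<in> VA - {a}"
  shows "((u, x), (v, y)) \<in> (induced_rel (VH - S) EH)\<^sup>*"
proof -
  have "fst ` S \<subseteq> VG"
    using S_subset by (auto simp: comp_vertices_def)
  then have "(u, v) \<in> (induced_rel (VG - fst ` S) EG)\<^sup>*"
    using k_connected_gconnected_Diff[OF three_connected_G _ card_fst_S] u v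
    by (simp add: gconnected_iff_induced_rel)
  then show ?thesis
    using y
  proof (induction arbitrary: y rule: rtrancl_induct)
    case base
    then show ?case by (rule intact_copy_connected[OF u x])
  next
    case (step w w' y)
    have ww': "w \<in> VG - fst ` S" "w' \<in> VG - fst ` S" "EG w w'"
      using step.hyps(2) by (auto simp: induced_rel_def)
    have "((u, x), (w, p w w')) \<in> (induced_rel (VH - S) EH)\<^sup>*"
      using step.IH port_nbr[OF ww'(3)] by simp
    moreover have "((w, p w w'), (w', p w' w)) \<in> induced_rel (VH - S) EH"
      using ww'(1,2) by (intro port_edge[OF ww'(3)]) (auto intro: rev_image_eqI)
    moreover have "((w', p w' w), (w', y)) \<in> (induced_rel (VH - S) EH)\<^sup>*"
      using intact_copy_connected[OF ww'(2) _ step.prems] port_nbr edge_G ww'(3) by simp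
    ultimately show ?case by (meson rtrancl_into_rtrancl rtrancl_trans)
  qed
qed

lemma fibre_subset: "Pair u -` S \<subseteq> VA - {a}"
  using S_subset by (auto simp: comp_vertices_def)

lemma finite_fibre: "finite (Pair u -` S)"
  using fibre_subset sgraph_A by (auto simp: sgraph_def intro: finite_subset)

lemma exit_port_if_S_within_copy:
  assumes ux: "(u, x) \<in> VH - S" and S_copy: "fst ` S \<subseteq> {u}"
  obtains w where "EG u w" and "w \<notin> fst ` S"
    and "(x, p u w) \<in> (induced_rel (VA - insert a (Pair u -` S)) EA)\<^sup>*"
proof -
  let ?Su = "Pair u -` S"
  have u: "u \<in> VG" and x: "x \<in> VA - ?Su" "x \<noteq> a"
    using ux by (auto simp: comp_vertices_def)
  have "card ?Su < 3"
    using card_vimage_Pair_add_card_fst_image_le[OF finite_S, of u] card_S by linarith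
  then have "gconnected (VA - ?Su) EA"
    using fibre_subset by (intro gconnected_A_Diff) auto
  moreover have "a \<in> VA - ?Su"
    using a_in_VA fibre_subset by auto
  ultimately have "(x, a) \<in> (induced_rel (VA - ?Su) EA)\<^sup>*"
    using x unfolding gconnected_iff_induced_rel by blast
  then obtain y where y: "EA y a" "(x, y) \<in> (induced_rel (VA - ?Su - {a}) EA)\<^sup>*"
    using x(2) by (rule induced_rel_rtrancl_last_step)
  have "y \<in> nbrs VA EA a"
    using edge_A[OF y(1)] by (simp add: nbrs_def)
  then have "y \<in> p u ` nbrs VG EG u"
    using bij_betw_imp_surj_on[OF port_bij[OF u]] by simp
  then obtain w where w: "y = p u w" and uw: "EG u w"
    by (auto simp: nbrs_def)
  then have "w \<notin> fst ` S"
    using edge_G[OF uw] S_copy by auto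
  moreover have "VA - ?Su - {a} = VA - insert a ?Su"
    by blast
  ultimately show ?thesis
    using that uw y(2) w by metis
qed

lemma exit_port_if_small_fibre:
  assumes ux: "(u, x) \<in> VH - S" and small: "card (Pair u -` S) \<le> 1"
    and count: "card (Pair u -` S) + card (fst ` S - {u}) \<le> 2"
  obtains w where "EG u w" and "w \<notin> fst ` S"
    and "(x, p u w) \<in> (induced_rel (VA - insert a (Pair u -` S)) EA)\<^sup>*"
proof -
  let ?Su = "Pair u -` S"
  define B where "B = {w \<in> nbrs VG EG u. p u w \<in> ?Su}"
  have u: "u \<in> VG" and x: "x \<in> VA - insert a ?Su"
    using ux by (auto simp: comp_vertices_def)
  have "card B \<le> card ?Su"
  proof (rule card_inj_on_le[where f = "p u"])
    show "inj_on (p u) B"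
      using bij_betw_imp_inj_on[OF port_bij[OF u]] by (rule inj_on_subset) (auto simp: B_def)
  qed (auto simp: B_def finite_fibre)
  then have "card (fst ` S - {u} \<union> B) < card (nbrs VG EG u)"
    using count card_Un_le[of "fst ` S - {u}" B] k_connected_card_nbrs_ge[OF three_connected_G u]
    by linarith
  moreover have "finite (fst ` S - {u} \<union> B)"
    using finite_S sgraph_G by (simp add: B_def nbrs_def sgraph_def)
  ultimately have "\<not> nbrs VG EG u \<subseteq> fst ` S - {u} \<union> B"
    using card_mono[of "fst ` S - {u} \<union> B" "nbrs VG EG u"] by linarith
  then obtain w where w: "w \<in> nbrs VG EG u" "w \<notin> fst ` S - {u}" "w \<notin> B"
    by blast
  then have uw: "EG u w" and pw: "p u w \<notin> ?Su"
    by (auto simp: nbrs_def B_def)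
  then have "w \<notin> fst ` S"
    using w(2) edge_G[OF uw] by auto
  have "card (insert a ?Su) < 3"
    using small finite_fibre by (simp add: card_insert_if)
  then have "gconnected (VA - insert a ?Su) EA"
    using a_in_VA fibre_subset by (intro gconnected_A_Diff) auto
  moreover have "p u w \<in> VA - insert a ?Su"
    using port_nbr[OF uw] pw by simp
  ultimately have "(x, p u w) \<in> (induced_rel (VA - insert a ?Su) EA)\<^sup>*"
    using x unfolding gconnected_iff_induced_rel by blast
  with uw \<open>w \<notin> fst ` S\<close> show ?thesis by (rule that)
qed

lemma exit_port:
  assumes ux: "(u, x) \<in> VH - S"
  obtains w where "EG u w" and "w \<notin> fst ` S"
    and "(x, p u w) \<in> (induced_rel (VA - insert a (Pair u -` S)) EA)\<^sup>*"
proof -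
  have count: "card (Pair u -` S) + card (fst ` S - {u}) \<le> 2"
    using card_vimage_Pair_add_card_fst_image_le[OF finite_S, of u] card_S by linarith
  show ?thesis
  proof (cases "card (Pair u -` S) \<le> 1")
    case True
    show ?thesis by (rule exit_port_if_small_fibre[OF ux True count that])
  next
    case False
    then have "card (fst ` S - {u}) = 0"
      using count by linarith
    then have "fst ` S \<subseteq> {u}"
      using finite_S by simp
    then show ?thesis by (rule exit_port_if_S_within_copy[OF ux _ that])
  qed
qed

lemma reaches_intact_copy:
  assumes ux: "(u, x) \<in> VH - S"
  obtains w y where "w \<in> VG - fst ` S" and "y \<in> VA - {a}"
    and "((u, x), (w, y)) \<in> (induced_rel (VH - S) EH)\<^sup>*"
proof -
  let ?W = "VA - insert a (Pair u -` S)"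
  obtain w where uw: "EG u w" and w: "w \<notin> fst ` S"
    and path: "(x, p u w) \<in> (induced_rel ?W EA)\<^sup>*"
    using exit_port[OF ux] .
  have "x \<in> ?W"
    using ux by (auto simp: comp_vertices_def)
  then have "p u w \<in> ?W"
    using induced_rel_rtrancl_closed[OF path] by simp
  have "((u, x), (u, p u w)) \<in> (induced_rel (VH - S) EH)\<^sup>*"
    using edge_G[OF uw] by (intro copy_path[OF path]) (auto simp: comp_vertices_def)
  moreover have "((u, p u w), (w, p w u)) \<in> induced_rel (VH - S) EH"
    using \<open>p u w \<in> ?W\<close> w by (intro port_edge[OF uw]) (auto intro: rev_image_eqI)
  ultimately have "((u, x), (w, p w u)) \<in> (induced_rel (VH - S) EH)\<^sup>*" ..
  moreover have "w \<in> VG - fst ` S" "p w u \<in> VA - {a}"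
    using edge_G[OF uw] port_nbr w by auto
  ultimately show ?thesis using that by blast
qed

lemma gconnected_comp_Diff: "gconnected (VH - S) EH"
proof -
  have "\<not> VG \<subseteq> fst ` S"
    using card_mono[of "fst ` S" VG] finite_S card_fst_S three_connected_G
    by (auto simp: k_connected_def)
  then obtain g where g: "g \<in> VG - fst ` S" by blast
  have "VA - {a} \<noteq> {}"
    using card_VA_minus_a by (intro notI) simp
  then obtain z where z: "z \<in> VA - {a}"
    by blast
  show ?thesis
  proof (rule gconnected_if_reaches_root)
    show "(g, z) \<in> VH - S"
      using g z by (auto simp: comp_vertices_def intro: rev_image_eqI)
  next
    fix v assume "v \<in> VH - S"
    then obtain w y where "w \<in> VG - fst ` S" "y \<in> VA - {a}"
      and "(v, (w, y)) \<in> (induced_rel (VH - S) EH)\<^sup>*"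
      by (metis prod.collapse reaches_intact_copy)
    then show "(v, (g, z)) \<in> (induced_rel (VH - S) EH)\<^sup>*"
      using intact_copies_connected g z by (meson rtrancl_trans)
  qed (use sgraph_comp in \<open>unfold sgraph_def, blast\<close>)
qed

end

lemma k_connected_comp: "k_connected 3 VH EH"
proof -
  have "4 \<le> card VG"
    using three_connected_G by (simp add: k_connected_def)
  moreover have "3 \<le> card VA - 1"
    using card_VA_minus_a sgraph_A a_in_VA by (simp add: sgraph_def)
  ultimately have "4 * 3 \<le> card VH"
    unfolding card_comp_vertices by (rule mult_le_mono)
  then show ?thesis
    using sgraph_comp gconnected_comp_Diff by (simp add: k_connected_def)
qed

end


theorem proposition5p18:
  fixes VG :: "'g set" and EG :: "'g \<Rightarrow> 'g \<Rightarrow> bool"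
    and VA :: "'a set" and EA :: "'a \<Rightarrow> 'a \<Rightarrow> bool"
    and a :: 'a and p :: "'g \<Rightarrow> 'g \<Rightarrow> 'a"
  assumes "cubic VG EG" and "k_connected 3 VG EG"
    and "cubic VA EA" and "k_connected 3 VA EA"
    and "a \<in> VA"
    and "valid_ports VG EG VA EA a p"
  shows "k_connected 3 (comp_vertices VG VA a) (comp_edges VG EG EA a p)"
proof -
  interpret three_connected_replacement VG EG VA EA a p
    using assms(2,4-6) by unfold_locales (simp_all add: k_connected_def)
  show ?thesis by (rule k_connected_comp)
qed

end
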